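(* Let $M(x,y)=M(q,\nu,t,w,1;x,y)$ and define the kernel $$K(x,y)=1-\frac{x^2ywt(\nu-1)}{x-1}-\frac{xy^2t}{y-1}-xyt(x\nu-1)M(x,1)-xywt\big((\nu-1)(y-1)+qy\big)M(1,y).$$ Set $x=1+ts$, where $s$ is a new indeterminate. Then there are exactly two series $Y$ in $\mathbb{Q}(q,\nu,w,s)[[t]]$ satisfying $K(1+ts,Y)=0$; denote them $Y_1,Y_2$. Their constant terms are $1$ and $\frac{s}{w(\nu-1)}$ respectively, and the coefficient of $t$ in $Y_1$ is $\frac{s}{w-w\nu+s}$ (in particular it is non-zero).
   Context: A planar map is a proper embedding of a connected planar graph (loops and multiple edges allowed) in the oriented sphere, up to orientation-preserving homeomorphism; it is rooted by distinguishing a corner (sector between consecutive edges around a vertex), whose vertex and face are the root-vertex and root-face; degrees are counted with multiplicity; the atomic map (one vertex, no edge) is included. $e(M),v(M),f(M)$ are numbers of edges, vertices, faces; $d_v(M),d_f(M)$ the degrees of root-vertex and root-face. The Potts polynomial of a graph $G$ is $P_G(q,\nu)=\sum_{c:V(G)\to\{1,\dots,q\}}\nu^{m(c)}$, $m(c)$ = number of monochromatic edges (loops always monochromatic), regarded as a polynomial in $q,\nu$ (divisible by $q$). $M(q,\nu,t,w,z;x,y)=\frac1q\sum_{M}t^{e(M)}w^{v(M)-1}z^{f(M)-1}x^{d_v(M)}y^{d_f(M)}P_M(q,\nu)$ summed over rooted planar maps, a series in $t$ with coefficients in $\mathbb{Q}[q,\nu,w,z,x,y]$. *)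

theory Defs
  imports "HOL-Computational_Algebra.Computational_Algebra"
          "HOL-Computational_Algebra.Fraction_Field"
          "HOL-Combinatorics.Permutations"
          "HOL-Library.FuncSet"
begin

section \<open>The coefficient field Q(q,nu,w,s)\<close>

type_synonym R = "rat poly poly poly poly"
type_synonym F = "R fract"

definition qF :: F where "qF = Fract ([:0,1:] :: R) 1"
definition nuF :: F where "nuF = Fract ([:[:0,1:]:] :: R) 1"
definition wF :: F where "wF = Fract ([:[:[:0,1:]:]:] :: R) 1"
definition sF :: F where "sF = Fract ([:[:[:[:0,1:]:]:]:] :: R) 1"

section \<open>Potts polynomial of a graph (loops and multiple edges allowed)\<close>

definition potts_colsum :: "'v set \<Rightarrow> 'e set \<Rightarrow> ('e \<Rightarrow> 'v set) \<Rightarrow> nat \<Rightarrow> int poly" where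
  "potts_colsum V E ends Q =
     (\<Sum>c\<in>PiE V (\<lambda>_. {1..Q}).
        [:0,1:] ^ card {e\<in>E. \<forall>u\<in>ends e. \<forall>v\<in>ends e. c u = c v})"

definition potts_poly :: "'v set \<Rightarrow> 'e set \<Rightarrow> ('e \<Rightarrow> 'v set) \<Rightarrow> int poly poly" where
  "potts_poly V E ends = (THE p. \<forall>Q\<ge>1. poly p [:int Q:] = potts_colsum V E ends Q)"

definition eval_qnu :: "int poly poly \<Rightarrow> F" where
  "eval_qnu p = poly (map_poly (\<lambda>c. poly (map_poly of_int c) nuF) p) qF"

section \<open>Rooted planar maps as combinatorial maps\<close>

definition orb :: "('a \<Rightarrow> 'a) \<Rightarrow> 'a \<Rightarrow> 'a set" where
  "orb f d = {(f ^^ k) d | k. True}"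

definition darts :: "nat \<Rightarrow> nat set" where "darts n = {..<2*n}"

definition map_verts :: "(nat \<Rightarrow> nat) \<Rightarrow> nat set \<Rightarrow> nat set set" where
  "map_verts \<sigma> D = orb \<sigma> ` D"
definition map_faces :: "(nat \<Rightarrow> nat) \<Rightarrow> (nat \<Rightarrow> nat) \<Rightarrow> nat set \<Rightarrow> nat set set" where
  "map_faces \<sigma> \<alpha> D = orb (\<sigma> \<circ> \<alpha>) ` D"
definition map_edges :: "(nat \<Rightarrow> nat) \<Rightarrow> nat set \<Rightarrow> nat set set" where
  "map_edges \<alpha> D = (\<lambda>d. {d, \<alpha> d}) ` D"

text \<open>Rooted planar maps with n \<ge> 1 edges: vertex rotation sigma, edge involution alpha
  (fixed-point free) on the dart set, connected, of genus 0 (Euler: v - e + f = 2), root dart r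
  (the root corner is the corner between r and sigma r).\<close>
definition rooted_maps :: "nat \<Rightarrow> ((nat \<Rightarrow> nat) \<times> (nat \<Rightarrow> nat) \<times> nat) set" where
  "rooted_maps n = {(\<sigma>, \<alpha>, r). \<sigma> permutes darts n \<and> \<alpha> permutes darts n \<and>
      (\<forall>d\<in>darts n. \<alpha> d \<noteq> d \<and> \<alpha> (\<alpha> d) = d) \<and> r \<in> darts n \<and>
      darts n \<subseteq> {d. (r, d) \<in> ({(a, \<sigma> a) | a. a \<in> darts n} \<union> {(a, \<alpha> a) | a. a \<in> darts n})\<^sup>*} \<and>
      card (map_verts \<sigma> (darts n)) + card (map_faces \<sigma> \<alpha> (darts n)) = n + 2}"

definition map_iso :: "nat \<Rightarrow> (((nat \<Rightarrow> nat) \<times> (nat \<Rightarrow> nat) \<times> nat) \<times> ((nat \<Rightarrow> nat) \<times> (nat \<Rightarrow> nat) \<times> nat)) set" where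
  "map_iso n = {((\<sigma>, \<alpha>, r), (\<sigma>', \<alpha>', r')).
      (\<sigma>, \<alpha>, r) \<in> rooted_maps n \<and> (\<sigma>', \<alpha>', r') \<in> rooted_maps n \<and>
      (\<exists>h. bij_betw h (darts n) (darts n) \<and> h r = r' \<and>
           (\<forall>d\<in>darts n. h (\<sigma> d) = \<sigma>' (h d) \<and> h (\<alpha> d) = \<alpha>' (h d)))}"

definition map_weight :: "F \<Rightarrow> nat \<Rightarrow> (nat \<Rightarrow> nat) \<times> (nat \<Rightarrow> nat) \<times> nat \<Rightarrow> F" where
  "map_weight z n m = (case m of (\<sigma>, \<alpha>, r) \<Rightarrow>
      wF ^ (card (map_verts \<sigma> (darts n)) - 1) * z ^ (card (map_faces \<sigma> \<alpha> (darts n)) - 1) *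
      eval_qnu (potts_poly (map_verts \<sigma> (darts n)) (map_edges \<alpha> (darts n)) (\<lambda>e. orb \<sigma> ` e)) / qF)"

definition root_vdeg :: "(nat \<Rightarrow> nat) \<times> (nat \<Rightarrow> nat) \<times> nat \<Rightarrow> nat" where
  "root_vdeg m = (case m of (\<sigma>, \<alpha>, r) \<Rightarrow> card (orb \<sigma> r))"
definition root_fdeg :: "(nat \<Rightarrow> nat) \<times> (nat \<Rightarrow> nat) \<times> nat \<Rightarrow> nat" where
  "root_fdeg m = (case m of (\<sigma>, \<alpha>, r) \<Rightarrow> card (orb (\<sigma> \<circ> \<alpha>) (\<sigma> r)))"

text \<open>Weight of the atomic map (one vertex, no edge, one face): w^0 z^0 P/q.\<close>
definition atomic_weight :: F where
  "atomic_weight = eval_qnu (potts_poly {()} ({} :: unit set) (\<lambda>_. {})) / qF"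

text \<open>Coefficient of t^n in M(q,nu,t,w,z;x,y), as a polynomial in y (outer) whose
  coefficients are polynomials in x, over F.\<close>
definition Mcoeff :: "F \<Rightarrow> nat \<Rightarrow> F poly poly" where
  "Mcoeff z n = (if n = 0 then [:[:atomic_weight:]:]
     else (\<Sum>C\<in>rooted_maps n // map_iso n.
             (let m = (SOME m. m \<in> C) in monom (monom (map_weight z n m) (root_vdeg m)) (root_fdeg m))))"

definition tsum_series :: "(nat \<Rightarrow> F fps) \<Rightarrow> F fps" where
  "tsum_series f = Abs_fps (\<lambda>n. \<Sum>k\<le>n. f k $ (n - k))"

definition M_x1 :: "F fps \<Rightarrow> F fps" where
  "M_x1 X = tsum_series (\<lambda>k. poly (map_poly fps_const (poly (Mcoeff 1 k) 1)) X)"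
definition M_1y :: "F fps \<Rightarrow> F fps" where
  "M_1y Y = tsum_series (\<lambda>k. poly (map_poly fps_const (map_poly (\<lambda>p. poly p 1) (Mcoeff 1 k))) Y)"

definition kernel :: "F fps \<Rightarrow> F fps \<Rightarrow> F fls" where
  "kernel X Y = (let x = fps_to_fls X; y = fps_to_fls Y; t = fls_X;
       q = fls_const qF; nu = fls_const nuF; w = fls_const wF in
     1 - x^2 * y * w * t * (nu - 1) / (x - 1) - x * y^2 * t / (y - 1)
       - x * y * t * (x * nu - 1) * fps_to_fls (M_x1 X)
       - x * y * w * t * ((nu - 1) * (y - 1) + q * y) * fps_to_fls (M_1y Y))"

end

theory Submission
  imports Defs
begin

(*
  With x = 1 + ts the pole 1/(x-1) of the kernel cancels: the second term becomes
  D(t) y with D = x^2 w(nu-1)/s, and clearing the remaining denominator y-1 turns K(x,y) = 0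
  into the power-series equation
      E(y) = (y - 1) (1 - D y - t R(y)) - t x y^2 = 0,
  where R(y) collects the two terms involving M.  The function M(1,y) only enters through
  substitution of y into polynomials, so t R(y) depends "contractively" on y in the t-adic sense.
  A root y has either y(0) = 1/c (c = D(0) = w(nu-1)/s), or y(0) = 1; in each case E(y) = 0 is
  equivalent to a fixed-point equation y = Phi(y) (resp. u = Phi(u) for y = 1 + t u) with Phi
  t-adically contracting, so each case has exactly one root.
*)

section \<open>X-adic Lipschitz maps on formal power series\<close>

lemma fps_X_power_dvd_iff:
  fixes f :: "'a::field fps"
  shows "fps_X ^ n dvd f \<longleftrightarrow> (\<forall>k<n. f $ k = 0)"
proof
  assume "fps_X ^ n dvd f"
  then obtain h where "f = fps_X ^ n * h" by (rule dvdE)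
  then show "\<forall>k<n. f $ k = 0" by (simp add: fps_X_power_mult_nth)
next
  assume "\<forall>k<n. f $ k = 0"
  then have "f = fps_X ^ n * fps_shift n f"
    by (intro fps_ext) (simp add: fps_X_power_mult_nth)
  then show "fps_X ^ n dvd f" by (metis dvd_triv_left)
qed

text \<open>A map is X-Lipschitz of order k if agreement of the arguments modulo X^n implies
  agreement of the images modulo X^(n+k); order 1 is the X-adic contraction property.\<close>
definition X_lipschitz :: "nat \<Rightarrow> ('a::field fps \<Rightarrow> 'a fps) \<Rightarrow> bool" where
  "X_lipschitz k \<Phi> \<longleftrightarrow>
     (\<forall>n f g. fps_X ^ n dvd (f - g) \<longrightarrow> fps_X ^ (n + k) dvd (\<Phi> f - \<Phi> g))"

lemma X_lipschitzI:
  "(\<And>n f g. fps_X ^ n dvd (f - g) \<Longrightarrow> fps_X ^ (n + k) dvd (\<Phi> f - \<Phi> g)) \<Longrightarrow> X_lipschitz k \<Phi>"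
  unfolding X_lipschitz_def by blast

lemma X_lipschitzD:
  "X_lipschitz k \<Phi> \<Longrightarrow> fps_X ^ n dvd (f - g) \<Longrightarrow> fps_X ^ (n + k) dvd (\<Phi> f - \<Phi> g)"
  unfolding X_lipschitz_def by blast

lemma X_lipschitz_const: "X_lipschitz k (\<lambda>y. c)"
  by (rule X_lipschitzI) simp

lemma X_lipschitz_id: "X_lipschitz 0 (\<lambda>y. y)"
  by (rule X_lipschitzI) simp

lemma X_lipschitz_add:
  assumes "X_lipschitz k \<Phi>" "X_lipschitz k \<Psi>"
  shows "X_lipschitz k (\<lambda>y. \<Phi> y + \<Psi> y)"
proof (rule X_lipschitzI)
  fix n and f g :: "'a fps"
  assume "fps_X ^ n dvd (f - g)"
  with assms have "fps_X ^ (n + k) dvd (\<Phi> f - \<Phi> g) + (\<Psi> f - \<Psi> g)"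
    by (blast intro: dvd_add X_lipschitzD)
  then show "fps_X ^ (n + k) dvd (\<Phi> f + \<Psi> f) - (\<Phi> g + \<Psi> g)"
    by (simp only: add_diff_add)
qed

lemma X_lipschitz_diff:
  assumes "X_lipschitz k \<Phi>" "X_lipschitz k \<Psi>"
  shows "X_lipschitz k (\<lambda>y. \<Phi> y - \<Psi> y)"
proof (rule X_lipschitzI)
  fix n and f g :: "'a fps"
  assume "fps_X ^ n dvd (f - g)"
  with assms have "fps_X ^ (n + k) dvd (\<Phi> f - \<Phi> g) - (\<Psi> f - \<Psi> g)"
    by (blast intro: dvd_diff X_lipschitzD)
  then show "fps_X ^ (n + k) dvd (\<Phi> f - \<Psi> f) - (\<Phi> g - \<Psi> g)"
    by (simp add: algebra_simps)
qed

lemma X_lipschitz_mult: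
  assumes "X_lipschitz k \<Phi>" "X_lipschitz k \<Psi>"
  shows "X_lipschitz k (\<lambda>y. \<Phi> y * \<Psi> y)"
proof (rule X_lipschitzI)
  fix n and f g :: "'a fps"
  assume "fps_X ^ n dvd (f - g)"
  with assms have "fps_X ^ (n + k) dvd \<Phi> f * (\<Psi> f - \<Psi> g) + (\<Phi> f - \<Phi> g) * \<Psi> g"
    by (blast intro: dvd_add dvd_mult dvd_mult2 X_lipschitzD)
  then show "fps_X ^ (n + k) dvd \<Phi> f * \<Psi> f - \<Phi> g * \<Psi> g"
    by (simp add: algebra_simps)
qed

lemma X_lipschitz_power: "X_lipschitz k \<Phi> \<Longrightarrow> X_lipschitz k (\<lambda>y. \<Phi> y ^ m)"
  by (induction m) (simp_all add: X_lipschitz_const X_lipschitz_mult)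

text \<open>Inversion preserves agreement modulo X^m: for m > 0 the constant terms agree, and
  when they are non-zero, 1/f - 1/g = (g - f)/(f g).\<close>
lemma fps_inverse_diff_dvd:
  fixes f g :: "'a::field fps"
  assumes "fps_X ^ m dvd (f - g)"
  shows "fps_X ^ m dvd (inverse f - inverse g)"
proof (cases "m = 0")
  case False
  then have same0: "f $ 0 = g $ 0"
    using assms by (auto simp: fps_X_power_dvd_iff)
  show ?thesis
  proof (cases "f $ 0 = 0")
    case True
    then show ?thesis using same0 by (simp add: fps_inverse_eq_0)
  next
    case False
    have "inverse f * f = 1" "inverse g * g = 1"
      using False same0 by (simp_all add: inverse_mult_eq_1)
    then have "inverse f - inverse g = inverse f * inverse g * (g - f)"
      by (simp add: algebra_simps)
    moreover have "fps_X ^ m dvd (g - f)"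
      using assms by (metis dvd_minus_iff minus_diff_eq)
    ultimately show ?thesis by simp
  qed
qed simp

lemma X_lipschitz_inverse: "X_lipschitz k \<Phi> \<Longrightarrow> X_lipschitz k (\<lambda>y. inverse (\<Phi> y))"
  by (rule X_lipschitzI) (rule fps_inverse_diff_dvd, erule (1) X_lipschitzD)

lemma X_lipschitz_times_X: "X_lipschitz k \<Phi> \<Longrightarrow> X_lipschitz (Suc k) (\<lambda>y. fps_X * \<Phi> y)"
proof (rule X_lipschitzI)
  fix n and f g :: "'a fps"
  assume "X_lipschitz k \<Phi>" "fps_X ^ n dvd (f - g)"
  then have "fps_X * fps_X ^ (n + k) dvd fps_X * (\<Phi> f - \<Phi> g)"
    by (blast intro: mult_dvd_mono[OF dvd_refl] X_lipschitzD)
  then show "fps_X ^ (n + Suc k) dvd fps_X * \<Phi> f - fps_X * \<Phi> g"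
    by (simp add: right_diff_distrib)
qed

lemma X_lipschitz_comp:
  fixes \<Phi> \<Psi> :: "'a::field fps \<Rightarrow> 'a fps"
  assumes "X_lipschitz a \<Psi>" "X_lipschitz b \<Phi>"
  shows "X_lipschitz (a + b) (\<lambda>y. \<Phi> (\<Psi> y))"
proof (rule X_lipschitzI)
  fix n and f g :: "'a fps"
  assume "fps_X ^ n dvd (f - g)"
  then have "fps_X ^ (n + a + b) dvd (\<Phi> (\<Psi> f) - \<Phi> (\<Psi> g))"
    using assms by (blast intro: X_lipschitzD)
  then show "fps_X ^ (n + (a + b)) dvd (\<Phi> (\<Psi> f) - \<Phi> (\<Psi> g))"
    by (simp only: add.assoc)
qed

lemma X_lipschitz_poly:
  fixes p :: "'a::field fps poly"
  shows "X_lipschitz k \<Phi> \<Longrightarrow> X_lipschitz k (\<lambda>y. poly p (\<Phi> y))"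
  by (induction p) (simp_all add: X_lipschitz_const X_lipschitz_add X_lipschitz_mult)

section \<open>The X-adic fixed-point theorem\<close>

text \<open>A contraction has at most one fixed point: two fixed points agree modulo every X^n.\<close>
lemma X_contraction_fixpoint_unique:
  fixes \<Phi> :: "'a::field fps \<Rightarrow> 'a fps"
  assumes contr: "X_lipschitz 1 \<Phi>" and "\<Phi> a = a" "\<Phi> b = b"
  shows "a = b"
proof -
  have "fps_X ^ n dvd (a - b)" for n
  proof (induction n)
    case (Suc n)
    then show ?case using X_lipschitzD[OF contr Suc] assms(2,3) by simp
  qed simp
  then have "(a - b) $ n = 0" for n
    using fps_X_power_dvd_iff[of "Suc n" "a - b"] by blast
  then show ?thesis by (simp add: fps_eq_iff)
qed

lemma X_contraction_iterates:
  fixes \<Phi> :: "'a::field fps \<Rightarrow> 'a fps"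
  assumes contr: "X_lipschitz 1 \<Phi>"
  shows "fps_X ^ a dvd ((\<Phi> ^^ (a + j)) y - (\<Phi> ^^ a) y)"
proof (induction a)
  case (Suc a)
  from X_lipschitzD[OF contr Suc] show ?case by simp
qed simp

text \<open>Existence: the limit of the iterates, read off coefficientwise, is a fixed point.\<close>
lemma X_contraction_fixpoint_exists:
  fixes \<Phi> :: "'a::field fps \<Rightarrow> 'a fps"
  assumes contr: "X_lipschitz 1 \<Phi>"
  shows "\<exists>y. \<Phi> y = y"
proof -
  define it where "it n = (\<Phi> ^^ n) 0" for n
  define Y where "Y = Abs_fps (\<lambda>n. it (Suc n) $ n)"
  have Y_approx: "fps_X ^ n dvd (Y - it n)" for n
  proof -
    have "(Y - it n) $ k = 0" if "k < n" for k
    proof -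
      have "fps_X ^ Suc k dvd (it (Suc k + (n - Suc k)) - it (Suc k))"
        unfolding it_def by (rule X_contraction_iterates[OF contr])
      then have "(it n - it (Suc k)) $ k = 0"
        using that unfolding fps_X_power_dvd_iff by simp
      then show ?thesis by (simp add: Y_def)
    qed
    then show ?thesis by (simp add: fps_X_power_dvd_iff)
  qed
  have "\<Phi> Y $ n = Y $ n" for n
  proof -
    have "fps_X ^ Suc n dvd (\<Phi> Y - it (Suc n))"
      using X_lipschitzD[OF contr Y_approx[of n]] by (simp add: it_def)
    then show ?thesis unfolding fps_X_power_dvd_iff by (simp add: Y_def)
  qed
  then show ?thesis by (auto simp: fps_eq_iff)
qed

lemma X_contraction_fixpoint:
  fixes \<Phi> :: "'a::field fps \<Rightarrow> 'a fps"
  assumes "X_lipschitz 1 \<Phi>"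
  shows "\<exists>!y. \<Phi> y = y"
  using X_contraction_fixpoint_exists[OF assms] X_contraction_fixpoint_unique[OF assms] by blast

section \<open>Sums over t-degree and the series M(1,y)\<close>

text \<open>The coefficient of t^n in tsum_series f only involves coefficients of index at most n
  of the f k, so a t-indexed family of non-expansive maps sums to a non-expansive map.\<close>
lemma X_lipschitz_tsum_series:
  assumes "\<And>k. X_lipschitz 0 (\<Phi> k)"
  shows "X_lipschitz 0 (\<lambda>y. tsum_series (\<lambda>k. \<Phi> k y))"
proof (rule X_lipschitzI)
  fix n and f g :: "F fps"
  assume agree: "fps_X ^ n dvd (f - g)"
  have "(tsum_series (\<lambda>k. \<Phi> k f) - tsum_series (\<lambda>k. \<Phi> k g)) $ m = 0" if "m < n" for m
  proof -
    have "(\<Phi> k f - \<Phi> k g) $ j = 0" if "j < n" for k j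
      using X_lipschitzD[OF assms agree] that unfolding fps_X_power_dvd_iff by simp
    then have "(\<Sum>k\<le>m. \<Phi> k f $ (m - k) - \<Phi> k g $ (m - k)) = 0"
      using \<open>m < n\<close> by (intro sum.neutral ballI) simp
    then show ?thesis by (simp add: tsum_series_def sum_subtractf)
  qed
  then show "fps_X ^ (n + 0) dvd tsum_series (\<lambda>k. \<Phi> k f) - tsum_series (\<lambda>k. \<Phi> k g)"
    by (simp add: fps_X_power_dvd_iff)
qed

text \<open>M(1,y) depends on y only through substitution into polynomials.\<close>
lemma X_lipschitz_M_1y: "X_lipschitz 0 M_1y"
  unfolding M_1y_def[abs_def]
  by (intro X_lipschitz_tsum_series X_lipschitz_poly X_lipschitz_id)

lemma sF_nonzero: "sF \<noteq> 0"
  by (simp add: sF_def Zero_fract_def eq_fract)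

lemma wF_nonzero: "wF \<noteq> 0"
  by (simp add: wF_def Zero_fract_def eq_fract)

lemma nuF_not_one: "nuF \<noteq> 1"
  by (simp add: nuF_def One_fract_def eq_fract one_pCons)

lemma wF_nuF_ne_sF: "wF * (nuF - 1) \<noteq> sF"
  by (simp add: wF_def nuF_def sF_def One_fract_def eq_fract one_pCons)

text \<open>The substitution x = 1 + ts, and c = w(nu-1)/s, the value at t = 0 of the coefficient
  D of y produced by cancelling the pole 1/(x-1).\<close>
definition x_s :: "F fps" where "x_s = 1 + fps_X * fps_const sF"
definition c_s :: F where "c_s = wF * (nuF - 1) / sF"

lemma c_s_nonzero: "c_s \<noteq> 0"
  using wF_nonzero nuF_not_one sF_nonzero by (simp add: c_s_def)

lemma c_s_not_one: "c_s \<noteq> 1"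
  using wF_nuF_ne_sF sF_nonzero by (auto simp: c_s_def field_simps)

lemma c_s_inverses:
  "inverse c_s = sF / (wF * (nuF - 1))"
  "inverse (1 - c_s) = sF / (wF - wF * nuF + sF)"
  "sF / (wF - wF * nuF + sF) \<noteq> 0"
proof -
  have denom: "wF - wF * nuF + sF \<noteq> 0"
    using wF_nuF_ne_sF by (auto simp: algebra_simps)
  show "inverse c_s = sF / (wF * (nuF - 1))" by (simp add: c_s_def)
  show "inverse (1 - c_s) = sF / (wF - wF * nuF + sF)"
    using denom sF_nonzero by (simp add: c_s_def field_simps)
  show "sF / (wF - wF * nuF + sF) \<noteq> 0" using denom sF_nonzero by simp
qed

section \<open>Reduction of the kernel equation to a power-series equation\<close>

text \<open>D is the coefficient of y after cancelling x - 1 = ts, R(y) the two terms involving M,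
  and E(y) = 0 the kernel equation multiplied by y - 1.\<close>
definition D_s :: "F fps" where "D_s = x_s ^ 2 * fps_const c_s"

definition R_s :: "F fps \<Rightarrow> F fps" where
  "R_s y = x_s * y * (x_s * fps_const nuF - 1) * M_x1 x_s
     + x_s * y * fps_const wF * ((fps_const nuF - 1) * (y - 1) + fps_const qF * y) * M_1y y"

definition E_s :: "F fps \<Rightarrow> F fps" where
  "E_s y = (y - 1) * (1 - D_s * y - fps_X * R_s y) - fps_X * x_s * y ^ 2"

lemma D_s_0: "D_s $ 0 = c_s"
  by (simp add: D_s_def x_s_def power2_eq_square)

lemma X_lipschitz_R_s: "X_lipschitz 0 R_s"
  unfolding R_s_def[abs_def]
  by (intro X_lipschitz_add X_lipschitz_mult X_lipschitz_diff X_lipschitz_const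
      X_lipschitz_id X_lipschitz_M_1y)

text \<open>With x = 1 + ts the pole of the kernel at x = 1 cancels.\<close>
lemma kernel_x_s:
  "kernel x_s Y = 1 - fps_to_fls D_s * fps_to_fls Y - fls_X * fps_to_fls (R_s Y)
     - fps_to_fls x_s * fps_to_fls Y ^ 2 * fls_X / (fps_to_fls Y - 1)"
proof -
  define x where "x = fps_to_fls x_s"
  define y where "y = fps_to_fls Y"
  have x_minus_1: "x - 1 = fls_X * fls_const sF"
    by (simp add: x_def x_s_def fls_times_fps_to_fls)
  have "fls_const c_s * fls_const sF = fls_const (wF * (nuF - 1))"
    using sF_nonzero by (simp add: c_s_def)
  also have "\<dots> = fls_const wF * (fls_const nuF - fls_const 1)"
    by (simp only: fls_minus_const fls_const_mult_const)
  finally have c_s_sF: "fls_const c_s * fls_const sF = fls_const wF * (fls_const nuF - 1)"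
    by simp
  have numerator: "x^2 * y * fls_const wF * fls_X * (fls_const nuF - 1)
      = (fps_to_fls D_s * y) * (fls_X * fls_const sF)"
    by (simp add: c_s_sF[symmetric] D_s_def fls_times_fps_to_fls fps_to_fls_power x_def mult_ac)
  have pole: "x^2 * y * fls_const wF * fls_X * (fls_const nuF - 1) / (x - 1) = fps_to_fls D_s * y"
    unfolding numerator x_minus_1 using sF_nonzero by simp
  have R: "fps_to_fls (R_s Y) = x * y * (x * fls_const nuF - 1) * fps_to_fls (M_x1 x_s)
      + x * y * fls_const wF * ((fls_const nuF - 1) * (y - 1) + fls_const qF * y) * fps_to_fls (M_1y Y)"
    by (simp add: R_s_def fls_times_fps_to_fls x_def y_def)
  show ?thesis
    unfolding kernel_def Let_def x_def[symmetric] y_def[symmetric] pole[symmetric] R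
    by (simp add: algebra_simps)
qed

text \<open>The kernel vanishes exactly where E does (y = 1 is a root of neither).\<close>
lemma kernel_x_s_eq_0_iff: "kernel x_s Y = 0 \<longleftrightarrow> E_s Y = 0"
proof (cases "Y = 1")
  case True
  have "kernel x_s 1 = fps_to_fls (1 - D_s - fps_X * R_s 1)"
    by (simp add: kernel_x_s fls_times_fps_to_fls)
  moreover have "(1 - D_s - fps_X * R_s 1) $ 0 \<noteq> 0"
    using c_s_not_one by (simp add: D_s_0)
  moreover have "E_s 1 $ 1 \<noteq> 0"
    by (simp add: E_s_def x_s_def)
  ultimately show ?thesis using True by (metis fps_to_fls_eq_0_iff fps_zero_nth)
next
  case False
  then have y_minus_1: "fps_to_fls Y - 1 \<noteq> 0" by simp
  have "kernel x_s Y * (fps_to_fls Y - 1) =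
      (1 - fps_to_fls D_s * fps_to_fls Y - fls_X * fps_to_fls (R_s Y)) * (fps_to_fls Y - 1)
      - fps_to_fls x_s * fps_to_fls Y ^ 2 * fls_X"
    unfolding kernel_x_s by (subst left_diff_distrib) (simp add: False)
  also have "\<dots> = fps_to_fls (E_s Y)"
    by (simp add: E_s_def fls_times_fps_to_fls fps_to_fls_power mult_ac)
  finally have "kernel x_s Y * (fps_to_fls Y - 1) = fps_to_fls (E_s Y)" .
  then show ?thesis using y_minus_1 by (metis fps_to_fls_eq_0_iff mult_eq_0_iff)
qed

section \<open>The two branches as fixed-point equations\<close>

text \<open>Roots with y(0) \<noteq> 1: dividing E(y) = 0 by (y - 1) D gives y = Phi2(y).\<close>
definition Phi2 :: "F fps \<Rightarrow> F fps" where
  "Phi2 y = inverse D_s * (1 - fps_X * R_s y - fps_X * (x_s * y ^ 2 * inverse (y - 1)))"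

text \<open>Roots y = 1 + t u: E(y) = t (u Den(y) - x y^2), so u = Phi1(u).\<close>
definition Den_s :: "F fps \<Rightarrow> F fps" where
  "Den_s y = 1 - D_s * y - fps_X * R_s y"

definition Phi1 :: "F fps \<Rightarrow> F fps" where
  "Phi1 u = x_s * (1 + fps_X * u) ^ 2 * inverse (Den_s (1 + fps_X * u))"

lemma X_lipschitz_Phi2: "X_lipschitz 1 Phi2"
proof -
  have "X_lipschitz 0 (\<lambda>y. R_s y + x_s * y ^ 2 * inverse (y - 1))"
    by (intro X_lipschitz_add X_lipschitz_mult X_lipschitz_diff X_lipschitz_const
        X_lipschitz_power X_lipschitz_id X_lipschitz_inverse X_lipschitz_R_s)
  then have "X_lipschitz 1 (\<lambda>y. fps_X * (R_s y + x_s * y ^ 2 * inverse (y - 1)))"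
    using X_lipschitz_times_X by fastforce
  then show ?thesis
    unfolding Phi2_def[abs_def] diff_diff_eq distrib_left[symmetric]
    by (rule X_lipschitz_mult[OF X_lipschitz_const X_lipschitz_diff[OF X_lipschitz_const]])
qed

lemma X_lipschitz_Phi1: "X_lipschitz 1 Phi1"
proof -
  have "X_lipschitz 1 (\<lambda>u. 1 + fps_X * u)"
    using X_lipschitz_add[OF X_lipschitz_const X_lipschitz_times_X[OF X_lipschitz_id]] by simp
  moreover have "X_lipschitz 0 (\<lambda>y. x_s * y ^ 2 * inverse (Den_s y))"
    unfolding Den_s_def
    by (intro X_lipschitz_mult X_lipschitz_diff X_lipschitz_const X_lipschitz_power
        X_lipschitz_id X_lipschitz_inverse X_lipschitz_R_s)
  ultimately show ?thesis
    using X_lipschitz_comp unfolding Phi1_def[abs_def] by fastforce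
qed

lemma unit_mult_eq_iff:
  fixes a b c v :: "'a::comm_ring_1"
  assumes "a * v = 1"
  shows "a * b = c \<longleftrightarrow> b = v * c"
proof
  assume "a * b = c"
  then have "v * c = (a * v) * b" by (metis mult.assoc mult.commute)
  then show "b = v * c" using assms by simp
next
  assume "b = v * c"
  then have "a * b = (a * v) * c" by (simp add: mult_ac)
  then show "a * b = c" using assms by simp
qed

lemma E_s_eq_0_iff_Phi2:
  assumes "y $ 0 \<noteq> 1"
  shows "E_s y = 0 \<longleftrightarrow> Phi2 y = y"
proof -
  have y_unit: "(y - 1) * inverse (y - 1) = 1"
    using assms by (simp add: inverse_mult_eq_1')
  have D_unit: "D_s * inverse D_s = 1"
    using c_s_nonzero by (simp add: inverse_mult_eq_1' D_s_0)
  have "E_s y = 0 \<longleftrightarrow> (y - 1) * (1 - D_s * y - fps_X * R_s y) = fps_X * x_s * y ^ 2"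
    by (simp only: E_s_def right_minus_eq)
  also have "\<dots> \<longleftrightarrow> 1 - D_s * y - fps_X * R_s y = inverse (y - 1) * (fps_X * x_s * y ^ 2)"
    by (rule unit_mult_eq_iff[OF y_unit])
  also have "\<dots> \<longleftrightarrow> D_s * y = 1 - fps_X * R_s y - inverse (y - 1) * (fps_X * x_s * y ^ 2)"
    by (auto simp: algebra_simps)
  also have "\<dots> \<longleftrightarrow> y = inverse D_s * (1 - fps_X * R_s y - inverse (y - 1) * (fps_X * x_s * y ^ 2))"
    by (rule unit_mult_eq_iff[OF D_unit])
  finally show ?thesis
    unfolding Phi2_def by (simp only: mult_ac eq_commute)
qed

lemma E_s_eq_0_iff_Phi1: "E_s (1 + fps_X * u) = 0 \<longleftrightarrow> Phi1 u = u"
proof -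
  let ?y = "1 + fps_X * u"
  have "Den_s ?y $ 0 = 1 - c_s"
    by (simp add: Den_s_def D_s_0)
  then have Den_unit: "Den_s ?y * inverse (Den_s ?y) = 1"
    using c_s_not_one by (simp add: inverse_mult_eq_1')
  have "E_s ?y = fps_X * (u * Den_s ?y - x_s * ?y ^ 2)"
    unfolding E_s_def Den_s_def by (simp add: algebra_simps)
  then have "E_s ?y = 0 \<longleftrightarrow> Den_s ?y * u = x_s * ?y ^ 2"
    by (simp add: mult.commute)
  also have "\<dots> \<longleftrightarrow> u = inverse (Den_s ?y) * (x_s * ?y ^ 2)"
    by (rule unit_mult_eq_iff[OF Den_unit])
  finally show ?thesis
    unfolding Phi1_def by (simp only: mult_ac eq_commute)
qed

lemma Phi2_nth_0: "Phi2 y $ 0 = inverse c_s"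
  by (simp add: Phi2_def D_s_0)

lemma Phi1_nth_0: "Phi1 u $ 0 = inverse (1 - c_s)"
  by (simp add: Phi1_def Den_s_def D_s_0 x_s_def power2_eq_square)

definition u1 :: "F fps" where "u1 = (THE u. Phi1 u = u)"
definition Y1 :: "F fps" where "Y1 = 1 + fps_X * u1"
definition Y2 :: "F fps" where "Y2 = (THE y. Phi2 y = y)"

lemma Phi1_u1: "Phi1 u1 = u1"
  unfolding u1_def by (rule theI'[OF X_contraction_fixpoint[OF X_lipschitz_Phi1]])

lemma Phi2_Y2: "Phi2 Y2 = Y2"
  unfolding Y2_def by (rule theI'[OF X_contraction_fixpoint[OF X_lipschitz_Phi2]])

lemma Y1_coeffs: "Y1 $ 0 = 1" "Y1 $ 1 = inverse (1 - c_s)"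
proof -
  show "Y1 $ 0 = 1" by (simp add: Y1_def)
  have "Y1 $ 1 = Phi1 u1 $ 0" by (simp add: Y1_def Phi1_u1)
  then show "Y1 $ 1 = inverse (1 - c_s)" by (simp only: Phi1_nth_0)
qed

lemma Y2_coeff: "Y2 $ 0 = inverse c_s"
  by (metis Phi2_Y2 Phi2_nth_0)

lemma Y2_coeff_not_one: "Y2 $ 0 \<noteq> 1"
  using c_s_not_one by (simp add: Y2_coeff)

text \<open>Every root lies on one of the two branches, and each branch has exactly one root.\<close>
lemma E_s_eq_0_iff: "E_s Y = 0 \<longleftrightarrow> Y = Y1 \<or> Y = Y2"
proof
  assume root: "E_s Y = 0"
  show "Y = Y1 \<or> Y = Y2"
  proof (cases "Y $ 0 = 1")
    case True
    then have Y_eq: "Y = 1 + fps_X * fps_shift 1 Y"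
      by (intro fps_ext) (simp add: fps_X_mult_nth)
    with root have "Phi1 (fps_shift 1 Y) = fps_shift 1 Y"
      using E_s_eq_0_iff_Phi1 by metis
    then have "fps_shift 1 Y = u1"
      using X_contraction_fixpoint_unique[OF X_lipschitz_Phi1 _ Phi1_u1] by blast
    then show ?thesis using Y_eq by (simp add: Y1_def)
  next
    case False
    with root have "Phi2 Y = Y" by (simp add: E_s_eq_0_iff_Phi2)
    then show ?thesis
      using X_contraction_fixpoint_unique[OF X_lipschitz_Phi2 _ Phi2_Y2] by blast
  qed
next
  assume "Y = Y1 \<or> Y = Y2"
  then show "E_s Y = 0"
    using E_s_eq_0_iff_Phi1[of u1] Phi1_u1 E_s_eq_0_iff_Phi2[OF Y2_coeff_not_one] Phi2_Y2
    by (auto simp: Y1_def)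
qed

theorem lemma6p1:
  shows "\<exists>Y1 Y2 :: F fps. Y1 \<noteq> Y2 \<and>
     {Y. kernel (1 + fps_X * fps_const sF) Y = 0} = {Y1, Y2} \<and>
     Y1 $ 0 = 1 \<and> Y2 $ 0 = sF / (wF * (nuF - 1)) \<and>
     Y1 $ 1 = sF / (wF - wF * nuF + sF) \<and> Y1 $ 1 \<noteq> 0"
proof -
  have roots: "{Y. kernel x_s Y = 0} = {Y1, Y2}"
    by (auto simp: kernel_x_s_eq_0_iff E_s_eq_0_iff)
  have "Y1 \<noteq> Y2"
    using Y1_coeffs(1) Y2_coeff_not_one by auto
  show ?thesis
  proof (rule exI[of _ Y1], rule exI[of _ Y2], intro conjI)
    show "{Y. kernel (1 + fps_X * fps_const sF) Y = 0} = {Y1, Y2}"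
      using roots by (simp add: x_s_def)
  qed (use \<open>Y1 \<noteq> Y2\<close> Y1_coeffs Y2_coeff c_s_inverses in simp_all)
qed

end
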